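(* Let $a_2,a_5$ be real constants, not both zero, and $k_1,k_3$ real constants. On the region where $r=\sqrt{x^2+y^2}>0$ and $a_2y-a_5x\neq0$, let $$V=\frac{k_1}{(a_2y-a_5x)^2}+\frac{k_3(a_2x+a_5y)}{r(a_2y-a_5x)^2},$$ let $L=x\dot y-y\dot x$, and let $$K=(a_2\dot x+a_5\dot y)L^2+\frac{2k_1r^2}{(a_2y-a_5x)^2}(a_2\dot x+a_5\dot y)+\frac{k_3r}{a_2y-a_5x}(a_2\dot y-a_5\dot x)-\frac{k_3(a_2x+a_5y)}{r(a_2y-a_5x)}L+\frac{2k_3(a_2x+a_5y)r}{(a_2y-a_5x)^2}(a_2\dot x+a_5\dot y).$$ Then the time-dependent function $$J=-tK+(a_2x+a_5y)L^2+\frac{2k_1r^2(a_2x+a_5y)}{(a_2y-a_5x)^2}+\frac{2k_3r(a_2x+a_5y)^2}{(a_2y-a_5x)^2}+k_3r$$ is a first integral of $\ddot x=-V_{,x}$, $\ddot y=-V_{,y}$.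
   Context: A first integral is a function of $(t,x,y,\dot x,\dot y)$ whose total time derivative vanishes along every solution of the given equations of motion. *)

theory Defs
  imports "HOL-Analysis.Analysis"
begin

definition rad :: "real \<Rightarrow> real \<Rightarrow> real" where
  "rad x y = sqrt (x\<^sup>2 + y\<^sup>2)"

definition Vpot :: "real \<Rightarrow> real \<Rightarrow> real \<Rightarrow> real \<Rightarrow> real \<Rightarrow> real \<Rightarrow> real" where
  "Vpot a2 a5 k1 k3 x y =
     k1 / (a2*y - a5*x)\<^sup>2 + k3 * (a2*x + a5*y) / (rad x y * (a2*y - a5*x)\<^sup>2)"

definition Lmom :: "real \<Rightarrow> real \<Rightarrow> real \<Rightarrow> real \<Rightarrow> real" where
  "Lmom x y xd yd = x*yd - y*xd"

definition Kfun :: "real \<Rightarrow> real \<Rightarrow> real \<Rightarrow> real \<Rightarrow> real \<Rightarrow> real \<Rightarrow> real \<Rightarrow> real \<Rightarrow> real" where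
  "Kfun a2 a5 k1 k3 x y xd yd =
     (a2*xd + a5*yd) * (Lmom x y xd yd)\<^sup>2
     + 2*k1*(rad x y)\<^sup>2 / (a2*y - a5*x)\<^sup>2 * (a2*xd + a5*yd)
     + k3 * rad x y / (a2*y - a5*x) * (a2*yd - a5*xd)
     - k3 * (a2*x + a5*y) / (rad x y * (a2*y - a5*x)) * Lmom x y xd yd
     + 2*k3*(a2*x + a5*y) * rad x y / (a2*y - a5*x)\<^sup>2 * (a2*xd + a5*yd)"

definition Jfun :: "real \<Rightarrow> real \<Rightarrow> real \<Rightarrow> real \<Rightarrow> real \<Rightarrow> real \<Rightarrow> real \<Rightarrow> real \<Rightarrow> real \<Rightarrow> real" where
  "Jfun a2 a5 k1 k3 t x y xd yd =
     - t * Kfun a2 a5 k1 k3 x y xd yd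
     + (a2*x + a5*y) * (Lmom x y xd yd)\<^sup>2
     + 2*k1*(rad x y)\<^sup>2 * (a2*x + a5*y) / (a2*y - a5*x)\<^sup>2
     + 2*k3*rad x y * (a2*x + a5*y)\<^sup>2 / (a2*y - a5*x)\<^sup>2
     + k3 * rad x y"

end

theory Submission imports Defs begin

text \<open>Split \<open>J = -t K + G\<close> with \<open>G\<close> the time-independent part. Along solutions \<open>K\<close> is
  conserved and \<open>dG/dt = K\<close>, so \<open>dJ/dt = -K - t \<cdot> 0 + K = 0\<close>. Both derivative identities
  become polynomial once \<open>1/(a\<^sub>2y - a\<^sub>5x)\<close> and \<open>1/r\<close> are treated as new variables
  \<open>A\<close>, \<open>B\<close> subject to \<open>(a\<^sub>2y - a\<^sub>5x) A = 1\<close>, \<open>r B = 1\<close> and \<open>r\<^sup>2 = x\<^sup>2 + y\<^sup>2\<close>; they then lie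
  in the ideal generated by these relations, which the \<open>algebra\<close> method decides.\<close>

definition Vpot_x :: "real \<Rightarrow> real \<Rightarrow> real \<Rightarrow> real \<Rightarrow> real \<Rightarrow> real \<Rightarrow> real" where
  "Vpot_x a2 a5 k1 k3 x y =
     2*k1*a5 / (a2*y - a5*x)^3
     + k3 * (a2 / (rad x y * (a2*y - a5*x)^2) - (a2*x + a5*y) * x / (rad x y^3 * (a2*y - a5*x)^2)
             + 2*a5*(a2*x + a5*y) / (rad x y * (a2*y - a5*x)^3))"

definition Vpot_y :: "real \<Rightarrow> real \<Rightarrow> real \<Rightarrow> real \<Rightarrow> real \<Rightarrow> real \<Rightarrow> real" where
  "Vpot_y a2 a5 k1 k3 x y =
     - 2*k1*a2 / (a2*y - a5*x)^3
     + k3 * (a5 / (rad x y * (a2*y - a5*x)^2) - (a2*x + a5*y) * y / (rad x y^3 * (a2*y - a5*x)^2)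
             - 2*a2*(a2*x + a5*y) / (rad x y * (a2*y - a5*x)^3))"

definition Gfun :: "real \<Rightarrow> real \<Rightarrow> real \<Rightarrow> real \<Rightarrow> real \<Rightarrow> real \<Rightarrow> real \<Rightarrow> real \<Rightarrow> real" where
  "Gfun a2 a5 k1 k3 x y xd yd =
     (a2*x + a5*y) * (Lmom x y xd yd)\<^sup>2
     + 2*k1*(rad x y)\<^sup>2 * (a2*x + a5*y) / (a2*y - a5*x)\<^sup>2
     + 2*k3*rad x y * (a2*x + a5*y)\<^sup>2 / (a2*y - a5*x)\<^sup>2
     + k3 * rad x y"

lemma Jfun_eq: "Jfun a2 a5 k1 k3 t x y xd yd = - t * Kfun a2 a5 k1 k3 x y xd yd + Gfun a2 a5 k1 k3 x y xd yd"
  unfolding Jfun_def Gfun_def by simp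

lemma rad_squared: "(rad x y)\<^sup>2 = x\<^sup>2 + y\<^sup>2"
  unfolding rad_def by simp

lemma has_real_derivative_rad:
  assumes "rad (f t) (g t) > 0"
    and "(f has_real_derivative f') (at t within S)" "(g has_real_derivative g') (at t within S)"
  shows "((\<lambda>s. rad (f s) (g s)) has_real_derivative (f t * f' + g t * g') / rad (f t) (g t)) (at t within S)"
proof -
  have pos: "(f t)\<^sup>2 + (g t)\<^sup>2 > 0"
    using assms(1) unfolding rad_def by simp
  have "((\<lambda>s. (f s)\<^sup>2 + (g s)\<^sup>2) has_real_derivative 2 * f t * f' + 2 * g t * g') (at t within S)"
    by (auto intro!: derivative_eq_intros assms(2,3))
  from DERIV_chain2[OF DERIV_real_sqrt[OF pos] this]
  have "((\<lambda>s. sqrt ((f s)\<^sup>2 + (g s)\<^sup>2)) has_real_derivative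
          inverse (sqrt ((f t)\<^sup>2 + (g t)\<^sup>2)) / 2 * (2 * f t * f' + 2 * g t * g')) (at t within S)" .
  moreover have "inverse (sqrt ((f t)\<^sup>2 + (g t)\<^sup>2)) / 2 * (2 * f t * f' + 2 * g t * g')
      = (f t * f' + g t * g') / sqrt ((f t)\<^sup>2 + (g t)\<^sup>2)"
    by (cases "sqrt ((f t)\<^sup>2 + (g t)\<^sup>2) = 0") (simp_all add: field_simps)
  ultimately show ?thesis
    unfolding rad_def by metis
qed

lemma has_real_derivative_Vpot_x:
  assumes "rad x y > 0" "a2*y - a5*x \<noteq> 0"
  shows "((\<lambda>u. Vpot a2 a5 k1 k3 u y) has_real_derivative Vpot_x a2 a5 k1 k3 x y) (at x)"
proof -
  \<comment> \<open>Folding the denominator into an atom keeps \<open>field_simps\<close> from expanding its powers.\<close>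
  define D where "D = a2*y - a5*x"
  have rad_x: "((\<lambda>u. rad u y) has_real_derivative (x * 1 + y * 0) / rad x y) (at x)"
    using has_real_derivative_rad[of "\<lambda>u. u" x "\<lambda>u. y" 1 UNIV 0] assms by (auto intro: derivative_eq_intros)
  show ?thesis
    unfolding Vpot_def
    apply (rule derivative_eq_intros rad_x refl | use assms in \<open>simp; fail\<close>)+
    unfolding Vpot_x_def using assms unfolding D_def[symmetric] by (simp add: field_simps; algebra)
qed

lemma has_real_derivative_Vpot_y:
  assumes "rad x y > 0" "a2*y - a5*x \<noteq> 0"
  shows "((\<lambda>w. Vpot a2 a5 k1 k3 x w) has_real_derivative Vpot_y a2 a5 k1 k3 x y) (at y)"
proof -
  define D where "D = a2*y - a5*x"
  have rad_y: "((\<lambda>w. rad x w) has_real_derivative (x * 0 + y * 1) / rad x y) (at y)"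
    using has_real_derivative_rad[of "\<lambda>u. x" y "\<lambda>u. u" 0 UNIV 1] assms by (auto intro: derivative_eq_intros)
  show ?thesis
    unfolding Vpot_def
    apply (rule derivative_eq_intros rad_y refl | use assms in \<open>simp; fail\<close>)+
    unfolding Vpot_y_def using assms unfolding D_def[symmetric] by (simp add: field_simps; algebra)
qed

lemma Kfun_inverse_form:
  assumes "A = inverse (a2*y - a5*x)" "B = inverse (rad x y)"
  shows "Kfun a2 a5 k1 k3 x y xd yd =
       (a2*xd + a5*yd) * (x*yd - y*xd)^2
     + 2*k1*(rad x y)^2 * A^2 * (a2*xd + a5*yd)
     + k3 * rad x y * A * (a2*yd - a5*xd)
     - k3 * (a2*x + a5*y) * B * A * (x*yd - y*xd)
     + 2*k3*(a2*x + a5*y) * rad x y * A^2 * (a2*xd + a5*yd)"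
  unfolding Kfun_def Lmom_def assms by (simp only: divide_inverse power_inverse inverse_mult_distrib)

lemma Gfun_inverse_form:
  assumes "A = inverse (a2*y - a5*x)"
  shows "Gfun a2 a5 k1 k3 x y xd yd =
       (a2*x + a5*y) * (x*yd - y*xd)^2
     + 2*k1*(rad x y)^2 * (a2*x + a5*y) * A^2
     + 2*k3*rad x y * (a2*x + a5*y)^2 * A^2
     + k3 * rad x y"
  unfolding Gfun_def Lmom_def assms by (simp only: divide_inverse power_inverse)

lemma Vpot_x_inverse_form:
  assumes "A = inverse (a2*y - a5*x)" "B = inverse (rad x y)"
  shows "Vpot_x a2 a5 k1 k3 x y =
     2*k1*a5*A^3 + k3 * (a2*B*A^2 - (a2*x + a5*y)*x*B^3*A^2 + 2*a5*(a2*x + a5*y)*B*A^3)"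
  unfolding Vpot_x_def assms
  by (simp only: divide_inverse power_inverse inverse_mult_distrib) (simp add: algebra_simps)

lemma Vpot_y_inverse_form:
  assumes "A = inverse (a2*y - a5*x)" "B = inverse (rad x y)"
  shows "Vpot_y a2 a5 k1 k3 x y =
     - 2*k1*a2*A^3 + k3 * (a5*B*A^2 - (a2*x + a5*y)*y*B^3*A^2 - 2*a2*(a2*x + a5*y)*B*A^3)"
  unfolding Vpot_y_def assms
  by (simp only: divide_inverse power_inverse inverse_mult_distrib) (simp add: algebra_simps)

context
  fixes a2 a5 k1 k3 t :: real and x y xd yd :: "real \<Rightarrow> real"
  assumes region: "rad (x t) (y t) > 0" "a2 * y t - a5 * x t \<noteq> 0"
    and dx: "(x has_real_derivative xd t) (at t)"
    and dy: "(y has_real_derivative yd t) (at t)"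
    and dxd: "(xd has_real_derivative - Vpot_x a2 a5 k1 k3 (x t) (y t)) (at t)"
    and dyd: "(yd has_real_derivative - Vpot_y a2 a5 k1 k3 (x t) (y t)) (at t)"
begin

lemma Kfun_Gfun_derivatives:
  shows "((\<lambda>s. Kfun a2 a5 k1 k3 (x s) (y s) (xd s) (yd s)) has_real_derivative 0) (at t)"
    and "((\<lambda>s. Gfun a2 a5 k1 k3 (x s) (y s) (xd s) (yd s))
           has_real_derivative Kfun a2 a5 k1 k3 (x t) (y t) (xd t) (yd t)) (at t)"
proof -
  define A where "A s = inverse (a2 * y s - a5 * x s)" for s
  define B where "B s = inverse (rad (x s) (y s))" for s
  note K_eq = Kfun_inverse_form[OF A_def B_def]
  note G_eq = Gfun_inverse_form[OF A_def]
  note Vx = Vpot_x_inverse_form[OF A_def B_def]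
  note Vy = Vpot_y_inverse_form[OF A_def B_def]
  have dA: "(A has_real_derivative - ((A t)^2 * (a2 * yd t - a5 * xd t))) (at t)"
    unfolding A_def
    by (rule derivative_eq_intros dx dy refl | use region in \<open>simp add: power2_eq_square; fail\<close>)+
  have dR: "((\<lambda>s. rad (x s) (y s)) has_real_derivative (x t * xd t + y t * yd t) * B t) (at t)"
    using has_real_derivative_rad[OF region(1) dx dy] unfolding B_def by (simp add: divide_inverse)
  have dB: "(B has_real_derivative - ((B t)^3 * (x t * xd t + y t * yd t))) (at t)"
    unfolding B_def
    apply (rule derivative_eq_intros dR refl | use region in \<open>simp; fail\<close>)+
    by (simp add: B_def power3_eq_cube algebra_simps)
  have rel: "rad (x t) (y t) * B t = 1" "(a2 * y t - a5 * x t) * A t = 1"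
    "(rad (x t) (y t))^2 = (x t)^2 + (y t)^2"
    using region unfolding B_def A_def by (simp_all add: rad_squared)
  \<comment> \<open>The derivative rules leave exponents \<open>2 - Suc 0\<close> and casts \<open>real 2\<close>, which \<open>algebra\<close> cannot read.\<close>
  have two: "2 - Suc 0 = (1::nat)" by simp
  show "((\<lambda>s. Kfun a2 a5 k1 k3 (x s) (y s) (xd s) (yd s)) has_real_derivative 0) (at t)"
    unfolding K_eq
    apply (rule derivative_eq_intros dA dB dR dxd dyd dx dy refl)+
    unfolding Vx Vy using rel by (simp only: of_nat_numeral two power_one_right mult_zero_left add_0; algebra)
  show "((\<lambda>s. Gfun a2 a5 k1 k3 (x s) (y s) (xd s) (yd s))
           has_real_derivative Kfun a2 a5 k1 k3 (x t) (y t) (xd t) (yd t)) (at t)"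
    unfolding G_eq K_eq
    apply (rule derivative_eq_intros dA dB dR dxd dyd dx dy refl)+
    unfolding Vx Vy using rel by (simp only: of_nat_numeral two power_one_right mult_zero_left add_0; algebra)
qed

end

theorem mainTheorem8:
  fixes a2 a5 k1 k3 :: real
    and T :: "real set"
    and x y xd yd :: "real \<Rightarrow> real"
  assumes notboth: "a2 \<noteq> 0 \<or> a5 \<noteq> 0"
    and T_open: "open T"
    and region: "\<And>t. t \<in> T \<Longrightarrow> rad (x t) (y t) > 0 \<and> a2 * y t - a5 * x t \<noteq> 0"
    and dx: "\<And>t. t \<in> T \<Longrightarrow> (x has_real_derivative xd t) (at t)"
    and dy: "\<And>t. t \<in> T \<Longrightarrow> (y has_real_derivative yd t) (at t)"
    and dxd: "\<And>t. t \<in> T \<Longrightarrow>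
               (xd has_real_derivative - deriv (\<lambda>u. Vpot a2 a5 k1 k3 u (y t)) (x t)) (at t)"
    and dyd: "\<And>t. t \<in> T \<Longrightarrow>
               (yd has_real_derivative - deriv (\<lambda>w. Vpot a2 a5 k1 k3 (x t) w) (y t)) (at t)"
  shows "\<forall>t\<in>T. ((\<lambda>s. Jfun a2 a5 k1 k3 s (x s) (y s) (xd s) (yd s))
                  has_real_derivative 0) (at t)"
proof
  fix t assume "t \<in> T"
  note region = region[OF \<open>t \<in> T\<close>, THEN conjunct1] region[OF \<open>t \<in> T\<close>, THEN conjunct2]
  have ddx: "(xd has_real_derivative - Vpot_x a2 a5 k1 k3 (x t) (y t)) (at t)"
    using dxd[OF \<open>t \<in> T\<close>] DERIV_imp_deriv[OF has_real_derivative_Vpot_x[OF region]] by simp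
  have ddy: "(yd has_real_derivative - Vpot_y a2 a5 k1 k3 (x t) (y t)) (at t)"
    using dyd[OF \<open>t \<in> T\<close>] DERIV_imp_deriv[OF has_real_derivative_Vpot_y[OF region]] by simp
  note rates = Kfun_Gfun_derivatives[OF region dx[OF \<open>t \<in> T\<close>] dy[OF \<open>t \<in> T\<close>] ddx ddy]
  show "((\<lambda>s. Jfun a2 a5 k1 k3 s (x s) (y s) (xd s) (yd s)) has_real_derivative 0) (at t)"
    unfolding Jfun_eq by (rule derivative_eq_intros rates refl | simp)+
qed

end
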